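(* Let $\mathcal{G}=(V,E_1,\dots,E_T)$ be a public transport graph on $n=|V|$ vertices composed of the routes $\mathcal{W}_1,\dots,\mathcal{W}_m$, such that the underlying graph $U(\mathcal{G})$ is connected. Then there exists an exploration of $\mathcal{G}$ of length at most $(2n-3)\max_{i\in[1,m]}L_i$, where $L_i=|\mathcal{W}_i|$.
   Context: A temporal graph $\mathcal{G}=(V,E_1,\dots,E_T)$ consists of a finite vertex set $V$ and an ordered sequence of edge sets $E_1,\dots,E_T$ on $V$ (timesteps); $T$ is the lifetime; an edge $e$ is active at timestep $t$ if $e\in E_t$; the underlying graph is $U(\mathcal{G})=(V,\bigcup_t E_t)$. A temporal walk is a sequence $((v_{i_1},v_{i_2}),t_1),\dots,((v_{i_{m-1}},v_{i_m}),t_{m-1})$ such that the edges form a walk (end point of each edge is the start point of the next), with $t_1<\dots<t_{m-1}$; its length is $t_{m-1}$ (the timestep of its last step). In a temporal graph, a temporal walk additionally requires each edge $(v_{i_j},v_{i_{j+1}})$ to be active at timestep $t_j$; it explores $\mathcal{G}$ if every vertex of $V$ belongs to some edge of the walk. A public transport graph with lifetime $T$ is defined by a set of temporal walks (routes) $\mathcal{W}_1,\dots,\mathcal{W}_m$ over a common vertex set $V$: writing the $j$-th step of $\mathcal{W}_i$ as $(\mathcal{W}_i[j],\mathcal{T}_i[j])$ and $L_i=|\mathcal{W}_i|$ (the last timestep of $\mathcal{W}_i$), for each $t\in[1,T]$ an edge $e$ belongs to $E_t$ iff there exist $i\in[1,m]$ and $j$ with $e=\mathcal{W}_i[j]$ and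 $\mathcal{T}_i[j]=t \bmod L_i$. (Routes are repeated periodically.) *)

theory Defs
  imports Main
begin

type_synonym 'a step = "('a \<times> 'a) \<times> nat"

definition step_edge :: "'a step \<Rightarrow> 'a set" where
  "step_edge s = {fst (fst s), snd (fst s)}"

definition temporal_walk :: "'a step list \<Rightarrow> bool" where
  "temporal_walk ws \<longleftrightarrow> ws \<noteq> [] \<and>
     (\<forall>j. Suc j < length ws \<longrightarrow> snd (fst (ws ! j)) = fst (fst (ws ! Suc j))) \<and>
     sorted_wrt (<) (map snd ws) \<and> (\<forall>s \<in> set ws. 1 \<le> snd s)"

text \<open>Length of a temporal walk = timestep of its last step (L_i = |W_i|).\<close>
definition walk_len :: "'a step list \<Rightarrow> nat" where
  "walk_len ws = snd (last ws)"

text \<open>Edge set E_t of the public transport graph defined by the routes Ws: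
  e \<in> E_t iff some step of some route W_i carries e at a timestep congruent to t mod L_i
  (routes repeated periodically).\<close>
definition pt_edges :: "'a step list list \<Rightarrow> nat \<Rightarrow> 'a set set" where
  "pt_edges Ws t = {e. \<exists>W \<in> set Ws. \<exists>j < length W.
      e = step_edge (W ! j) \<and> snd (W ! j) mod walk_len W = t mod walk_len W}"

definition underlying_edges :: "'a step list list \<Rightarrow> 'a set set" where
  "underlying_edges Ws = (\<Union>t \<in> {1..}. pt_edges Ws t)"

definition connected_on :: "'a set \<Rightarrow> 'a set set \<Rightarrow> bool" where
  "connected_on V E \<longleftrightarrow>
     (\<forall>u \<in> V. \<forall>v \<in> V. (u, v) \<in> {(x, y). {x, y} \<in> E}\<^sup>*)"

definition pt_temporal_walk :: "'a step list list \<Rightarrow> 'a step list \<Rightarrow> bool" where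
  "pt_temporal_walk Ws ws \<longleftrightarrow> temporal_walk ws \<and>
     (\<forall>s \<in> set ws. step_edge s \<in> pt_edges Ws (snd s))"

definition explores :: "'a set \<Rightarrow> 'a step list list \<Rightarrow> 'a step list \<Rightarrow> bool" where
  "explores V Ws ws \<longleftrightarrow> pt_temporal_walk Ws ws \<and> V \<subseteq> (\<Union>s \<in> set ws. step_edge s)"

definition pt_graph :: "'a set \<Rightarrow> 'a step list list \<Rightarrow> bool" where
  "pt_graph V Ws \<longleftrightarrow> finite V \<and> Ws \<noteq> [] \<and>
     (\<forall>W \<in> set Ws. temporal_walk W \<and> (\<forall>s \<in> set W. step_edge s \<subseteq> V))"

end

theory Submission
  imports Defs
begin

text \<open>Growing a closed walk by detours \<open>x \<rightarrow> y \<rightarrow> x\<close> along edges that leave the set of visited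
  vertices (i.e. traversing a spanning tree in both directions) gives a closed walk through all
  \<open>n\<close> vertices of the underlying graph with \<open>2n - 2\<close> edges; dropping its last edge still visits
  every vertex, leaving \<open>2n - 3\<close> edges.
  Every route is repeated with period at most \<open>M = max L\<^sub>i\<close>, so each edge of the underlying graph
  is active in every window of \<open>M\<close> consecutive timesteps. Traversing the \<open>k\<close>-th edge of the walk
  within the \<open>k\<close>-th window \<open>((k - 1) M, k M]\<close> yields the exploration.\<close>

lemma rtrancl_exits_set:
  assumes "(a, b) \<in> R\<^sup>*" "a \<in> S" "b \<notin> S"
  shows "\<exists>x y. (x, y) \<in> R \<and> x \<in> S \<and> y \<notin> S"
  using assms
proof (induction rule: rtrancl_induct)
  case (step b c)
  then show ?case by (cases "b \<in> S") auto
qed simp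

lemma successively_detour:
  assumes "successively R p" "x \<in> set p" "R x y" "R y x"
  shows "\<exists>q. successively R q \<and> hd q = hd p \<and> last q = last p
           \<and> set q = insert y (set p) \<and> length q = length p + 2"
proof -
  obtain xs ys where p: "p = xs @ x # ys" using split_list[OF assms(2)] by blast
  let ?q = "xs @ x # y # x # ys"
  have "successively R ?q"
    using assms(1,3,4) unfolding p by (auto simp: successively_append_iff)
  moreover have "hd ?q = hd p" unfolding p by (cases xs) auto
  moreover have "last ?q = last p" unfolding p by (cases ys) auto
  ultimately show ?thesis unfolding p by (intro exI[of _ ?q]) auto
qed

lemma connected_closed_walk_spanning:
  assumes "finite V" "connected_on V E" "\<Union>E \<subseteq> V" "v \<in> V"
  shows "\<exists>p. p \<noteq> [] \<and> hd p = v \<and> last p = v \<and> successively (\<lambda>x y. {x, y} \<in> E) p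
           \<and> set p = V \<and> length p = 2 * card V - 1"
proof -
  let ?walk = "successively (\<lambda>x y. {x, y} \<in> E)"
  have grow: "\<exists>p. p \<noteq> [] \<and> hd p = v \<and> last p = v \<and> ?walk p
          \<and> set p \<subseteq> V \<and> card (set p) = Suc k \<and> length p = Suc (2 * k)"
    if "k < card V" for k
    using that
  proof (induction k)
    case 0
    show ?case using assms(4) by (intro exI[of _ "[v]"]) auto
  next
    case (Suc k)
    then obtain p where p: "p \<noteq> []" "hd p = v" "last p = v" "?walk p"
      "set p \<subseteq> V" "card (set p) = Suc k" "length p = Suc (2 * k)" by auto
    have "set p \<noteq> V" using p(6) Suc.prems by auto
    then obtain w where w: "w \<in> V" "w \<notin> set p" using p(5) by blast
    have "v \<in> set p" using p(1,2) by auto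
    moreover have "(v, w) \<in> {(x, y). {x, y} \<in> E}\<^sup>*"
      using assms(2)[unfolded connected_on_def, rule_format, OF assms(4) w(1)] .
    ultimately obtain x y where xy: "{x, y} \<in> E" "x \<in> set p" "y \<notin> set p"
      using rtrancl_exits_set[of v w _ "set p"] w(2) by blast
    then have "y \<in> V" using assms(3) by blast
    have "{y, x} \<in> E" using xy(1) by (simp add: insert_commute)
    then obtain q where q: "?walk q" "hd q = v" "last q = v" "set q = insert y (set p)"
      "length q = length p + 2"
      using successively_detour[OF p(4) xy(2), of y] xy(1) p(2,3) by auto
    have "card (set q) = Suc (Suc k)" using q(4) xy(3) p(6) by simp
    then show ?case using q p(5,7) \<open>y \<in> V\<close> by (intro exI[of _ q]) auto
  qed
  have "0 < card V" using assms(1,4) card_gt_0_iff by blast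
  then obtain p where p: "p \<noteq> []" "hd p = v" "last p = v" "?walk p" "set p \<subseteq> V"
    "card (set p) = card V" "length p = 2 * card V - 1"
    using grow[of "card V - 1"] by auto
  have "set p = V" using p(5,6) assms(1) by (simp add: card_subset_eq)
  with p show ?thesis by blast
qed

lemma connected_walk_spanning:
  assumes "finite V" "connected_on V E" "\<Union>E \<subseteq> V" "2 \<le> card V"
  shows "\<exists>p. successively (\<lambda>x y. {x, y} \<in> E) p \<and> set p = V
           \<and> 2 \<le> length p \<and> length p \<le> 2 * card V - 2"
proof -
  obtain v where "v \<in> V" using assms(4) by fastforce
  then obtain p where p: "p \<noteq> []" "hd p = v" "last p = v" "successively (\<lambda>x y. {x, y} \<in> E) p"
    "set p = V" "length p = 2 * card V - 1"
    using connected_closed_walk_spanning[OF assms(1-3)] by blast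
  define q where "q = butlast p"
  have pq: "p = q @ [v]" unfolding q_def using p(1,3) by (metis append_butlast_last_id)
  have "q \<noteq> []" using p(6) assms(4) pq by auto
  then have "v \<in> set q" using p(2) pq by (metis hd_append2 hd_in_set)
  then have "set q = V" using p(5) pq by auto
  moreover have "successively (\<lambda>x y. {x, y} \<in> E) q"
    using p(4) pq by (simp add: successively_append_iff)
  moreover have "length q = 2 * card V - 2" using p(6) pq by simp
  ultimately show ?thesis using assms(4) by auto
qed

lemma underlying_edges_subset:
  assumes "pt_graph V Ws"
  shows "\<Union>(underlying_edges Ws) \<subseteq> V"
  using assms unfolding pt_graph_def underlying_edges_def pt_edges_def
  by (force simp: nth_mem)

lemma walk_len_pos: "temporal_walk W \<Longrightarrow> 0 < walk_len W"
  unfolding temporal_walk_def walk_len_def by (metis last_in_set less_le_trans zero_less_one)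

lemma temporal_walk_singleton: "1 \<le> t \<Longrightarrow> temporal_walk [((u, v), t)]"
  by (simp add: temporal_walk_def)

lemma temporal_walk_Cons:
  assumes "temporal_walk ws" "1 \<le> snd s" "snd (fst s) = fst (fst (hd ws))"
    "\<forall>s' \<in> set ws. snd s < snd s'"
  shows "temporal_walk (s # ws)"
  unfolding temporal_walk_def
proof (intro conjI allI impI)
  fix j assume "Suc j < length (s # ws)"
  then show "snd (fst ((s # ws) ! j)) = fst (fst ((s # ws) ! Suc j))"
    using assms(1,3) unfolding temporal_walk_def by (cases j) (auto simp: hd_conv_nth)
qed (use assms in \<open>auto simp: temporal_walk_def\<close>)

lemma exists_mod_eq_in_window:
  fixes a s L :: nat
  assumes "0 < L"
  shows "\<exists>t. a \<le> t \<and> t < a + L \<and> t mod L = s mod L"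
proof -
  define r where "r = (s + L * a - a) mod L"
  have "a \<le> s + L * a" using assms by (cases L) auto
  then have "(a + r) mod L = (s + L * a) mod L"
    unfolding r_def by (simp add: mod_add_right_eq)
  also have "\<dots> = s mod L" by simp
  finally have "(a + r) mod L = s mod L" .
  moreover have "r < L" using assms unfolding r_def by simp
  ultimately show ?thesis by (intro exI[of _ "a + r"]) auto
qed

lemma underlying_edge_active_in_window:
  assumes "\<forall>W \<in> set Ws. temporal_walk W" "\<forall>W \<in> set Ws. walk_len W \<le> M"
    "e \<in> underlying_edges Ws"
  shows "\<exists>t. a < t \<and> t \<le> a + M \<and> e \<in> pt_edges Ws t"
proof -
  obtain W j where W: "W \<in> set Ws" "j < length W" "e = step_edge (W ! j)"
    using assms(3) unfolding underlying_edges_def pt_edges_def by blast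
  obtain t where t: "Suc a \<le> t" "t < Suc a + walk_len W"
    "t mod walk_len W = snd (W ! j) mod walk_len W"
    using exists_mod_eq_in_window[OF walk_len_pos] assms(1) W(1) by blast
  have "e \<in> pt_edges Ws t" using W(1,2) t(3)[symmetric] unfolding W(3) pt_edges_def by blast
  moreover have "walk_len W \<le> M" using assms(2) W(1) by blast
  ultimately show ?thesis using t(1,2) by (intro exI[of _ t]) auto
qed

lemma pt_temporal_walk_along_underlying_walk:
  assumes routes: "\<forall>W \<in> set Ws. temporal_walk W" "\<forall>W \<in> set Ws. walk_len W \<le> M"
    and "successively (\<lambda>x y. {x, y} \<in> underlying_edges Ws) p" "2 \<le> length p"
  shows "\<exists>ws. pt_temporal_walk Ws ws \<and> fst (fst (hd ws)) = hd p
           \<and> (\<Union>s \<in> set ws. step_edge s) = set p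
           \<and> (\<forall>s \<in> set ws. a < snd s \<and> snd s \<le> a + (length p - 1) * M)"
  using assms(3,4)
proof (induction p arbitrary: a rule: induct_list012)
  case (3 x y zs)
  obtain t where t: "a < t" "t \<le> a + M" "{x, y} \<in> pt_edges Ws t"
    using underlying_edge_active_in_window[OF routes] "3.prems"(1) by fastforce
  let ?s = "((x, y), t)"
  show ?case
  proof (cases zs)
    case Nil
    have "pt_temporal_walk Ws [?s]"
      using t unfolding pt_temporal_walk_def by (simp add: temporal_walk_singleton step_edge_def)
    then show ?thesis using t Nil by (intro exI[of _ "[?s]"]) (auto simp: step_edge_def)
  next
    case (Cons z zs')
    obtain ws where ws: "pt_temporal_walk Ws ws" "fst (fst (hd ws)) = y"
      "(\<Union>s \<in> set ws. step_edge s) = set (y # zs)"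
      "\<forall>s \<in> set ws. a + M < snd s \<and> snd s \<le> a + M + length zs * M"
      using "3.IH"(2)[of "a + M"] "3.prems"(1) Cons by auto
    have "temporal_walk (?s # ws)"
      using ws(1,2,4) t(1,2) by (intro temporal_walk_Cons) (auto simp: pt_temporal_walk_def)
    then have "pt_temporal_walk Ws (?s # ws)"
      using ws(1) t(3) by (simp add: pt_temporal_walk_def step_edge_def)
    then show ?thesis using ws(3,4) t(1,2) by (intro exI[of _ "?s # ws"]) (auto simp: step_edge_def)
  qed
qed auto

theorem theorem12:
  fixes V :: "'a set" and Ws :: "'a step list list"
  assumes "pt_graph V Ws"
    and "card V \<ge> 2"
    and "connected_on V (underlying_edges Ws)"
  shows "\<exists>ws. explores V Ws ws \<and>
           walk_len ws \<le> (2 * card V - 3) * Max (walk_len ` set Ws)"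
proof -
  let ?M = "Max (walk_len ` set Ws)"
  have "finite V" and routes: "\<forall>W \<in> set Ws. temporal_walk W" "\<forall>W \<in> set Ws. walk_len W \<le> ?M"
    using assms(1) unfolding pt_graph_def by auto
  obtain p where p: "successively (\<lambda>x y. {x, y} \<in> underlying_edges Ws) p" "set p = V"
    "2 \<le> length p" "length p \<le> 2 * card V - 2"
    using connected_walk_spanning[OF \<open>finite V\<close> assms(3)
        underlying_edges_subset[OF assms(1)] assms(2)] by blast
  obtain ws where ws: "pt_temporal_walk Ws ws" "(\<Union>s \<in> set ws. step_edge s) = V"
    "\<forall>s \<in> set ws. snd s \<le> (length p - 1) * ?M"
    using pt_temporal_walk_along_underlying_walk[OF routes p(1,3), of 0] p(2) by auto
  have "last ws \<in> set ws" using ws(1) by (simp add: pt_temporal_walk_def temporal_walk_def)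
  then have "walk_len ws \<le> (length p - 1) * ?M" using ws(3) by (simp add: walk_len_def)
  also have "\<dots> \<le> (2 * card V - 3) * ?M" using p(4) by (intro mult_right_mono) auto
  finally show ?thesis using ws(1,2) unfolding explores_def by auto
qed

end
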